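(* Let $d\ge 1$ and let $X=\sum_{n\ge 0}\sum_{W\in\{1,\dots,d\}^n} X^W e_{w_1}\otimes\cdots\otimes e_{w_n}$ (with $W=(w_1,\dots,w_n)$, $X^W\in\mathbb{R}$) be an element of the tensor algebra over $\mathbb{R}^d$ whose radius of convergence $\rho(X)$ is strictly positive. Then $X$ is determined by its generating function $\Phi_X$ through the following explicit formula. Fix $n\ge 0$, a word $W=(w_1,\dots,w_n)\in\{1,\dots,d\}^n$, and any integer $k\ge n+1$. For $i\in\{1,\dots,d\}$ let $r^W(i)$ be the number of times $i$ appears in $W$, and for $1\le t\le r^W(i)$ let $p^W(i\,|\,t)$ be the position at which $i$ appears in $W$ for the $t$-th time. Define linear maps $M^W_1,\dots,M^W_d\in\mathcal{L}(\mathbb{R}^d;\mathfrak{so}(k,\mathbb{R}))$ by $$M^W_i(e_j)=\begin{cases}\sum_{t=1}^{r^W(i)}\left(E^{p^W(i|t)}_{p^W(i|t)+1}-E^{p^W(i|t)+1}_{p^W(i|t)}\right) & \text{if } i=j \text{ and } r^W(i)\neq 0,\\ 0 & \text{if } r^W(i)=0 \text{ or } i\ne j,\end{cases}$$ where $E^a_b$ is the $k\times k$ matrix with $(a,b)$-entry $1$ and all other entries $0$. For $\theta=(\theta_1,\dots,\theta_d)\in\mathbb{R}^d$ set $M^W_{(\theta)}=\sum_{i=1}^d\theta_i M^W_i$. Then $\theta\mapsto\Phi_X(M^W_{(\theta)})$ is defined and smooth for $\theta$ in a neighbourhood of $0$, and $$X^W=\frac{1}{\mathcal{C}_W}\times\left\{\text{the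 }(1,n+1)\text{-entry of the matrix } \frac{\partial^n\Phi_X(M^W_{(\theta)})}{\partial\theta_{w_1}\cdots\partial\theta_{w_n}}\Big|_{\theta=0}\right\},\qquad \mathcal{C}_W=\prod_{i=1}^d\big(r^W(i)!\big)$$ (with $0!=1$; for $n=0$ no derivative is taken and all $M^W_i=0$).
   Context: $\{e_1,\dots,e_d\}$ is the standard basis of $\mathbb{R}^d$. Elements of the tensor algebra are (formal) sequences $X=(\pi_0(X),\pi_1(X),\dots)$ with $\pi_n(X)\in(\mathbb{R}^d)^{\otimes n}$, $(\mathbb{R}^d)^{\otimes 0}=\mathbb{R}$; $\pi_n(X)=\sum_{W\in\{1,\dots,d\}^n}X^W e_{w_1}\otimes\cdots\otimes e_{w_n}$. $\mathbb{R}^d$ carries the $\ell_1$-norm and each $(\mathbb{R}^d)^{\otimes n}$ the projective tensor norm $\|\cdot\|$. The radius of convergence $\rho(X)\in[0,\infty]$ is the radius of convergence of the complex power series $\lambda\mapsto\sum_{n\ge0}\|\pi_n(X)\|\lambda^n$. $\mathfrak{su}(k)$ is the space of $k\times k$ skew-Hermitian complex matrices, $\mathfrak{so}(k,\mathbb{R})\subset\mathfrak{su}(k)$ the real antisymmetric ones, and $\mathfrak{gl}(k,\mathbb{C})$ all complex $k\times k$ matrices with the Hilbert–Schmidt norm. For $M\in\mathcal{L}(\mathbb{R}^d;\mathfrak{su}(k))$, the canonical extension $\widetilde M$ is the algebra homomorphism with $\widetilde M(1)=I_k$ and $\widetilde M(e_{i_1}\otimes\cdots\otimes e_{i_\ell})=M(e_{i_1})\cdots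 M(e_{i_\ell})$ (matrix product). The generating function of $X$ is $\Phi_X(M)=\widetilde M(X)=\sum_{n\ge0}\widetilde M(\pi_n(X))\in\mathfrak{gl}(k,\mathbb{C})$, defined whenever this series converges (in particular whenever the operator norm of $M$ is less than $\rho(X)$). *)

theory Defs
  imports "HOL-Analysis.Analysis"
begin

text \<open>Words over the alphabet 'd (a finite type with CARD('d) = d letters, standing for
  the basis e_1,...,e_d of R^d). A tensor-algebra element X is given by its coefficients
  X^W for all words W.\<close>

definition words :: "nat \<Rightarrow> 'd::finite list set" where
  "words n = {W. length W = n}"

text \<open>Projective tensor norm of pi_n(X) for the l1 norm on R^d:
  it equals the l1 norm of the coefficients.\<close>
definition proj_norm :: "('d::finite list \<Rightarrow> real) \<Rightarrow> nat \<Rightarrow> real" where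
  "proj_norm X n = (\<Sum>W\<in>words n. \<bar>X W\<bar>)"

definition radius :: "('d::finite list \<Rightarrow> real) \<Rightarrow> ereal" where
  "radius X = conv_radius (\<lambda>n. complex_of_real (proj_norm X n))"

text \<open>k x k complex matrices, represented by their entries indexed by 1..k.\<close>
type_synonym cmat = "nat \<Rightarrow> nat \<Rightarrow> complex"

definition mat_mult :: "nat \<Rightarrow> cmat \<Rightarrow> cmat \<Rightarrow> cmat" where
  "mat_mult k A B = (\<lambda>a b. \<Sum>c=1..k. A a c * B c b)"

definition mat_id :: cmat where
  "mat_id = (\<lambda>a b. if a = b then 1 else 0)"

text \<open>Canonical extension applied to a word: M(e_{v1}) ... M(e_{vn}); M is the linear map
  R^d -> gl(k) given by its values on the basis vectors.\<close>
fun mat_word :: "nat \<Rightarrow> ('d \<Rightarrow> cmat) \<Rightarrow> 'd list \<Rightarrow> cmat" where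
  "mat_word k M [] = mat_id"
| "mat_word k M (v # vs) = mat_mult k (M v) (mat_word k M vs)"

definition gen_term :: "nat \<Rightarrow> ('d::finite list \<Rightarrow> real) \<Rightarrow> ('d \<Rightarrow> cmat) \<Rightarrow> nat \<Rightarrow> cmat" where
  "gen_term k X M n = (\<lambda>a b. \<Sum>V\<in>words n. complex_of_real (X V) * mat_word k M V a b)"

definition Phi_defined :: "nat \<Rightarrow> ('d::finite list \<Rightarrow> real) \<Rightarrow> ('d \<Rightarrow> cmat) \<Rightarrow> bool" where
  "Phi_defined k X M = (\<forall>a\<in>{1..k}. \<forall>b\<in>{1..k}. summable (\<lambda>n. gen_term k X M n a b))"

definition Phi :: "nat \<Rightarrow> ('d::finite list \<Rightarrow> real) \<Rightarrow> ('d \<Rightarrow> cmat) \<Rightarrow> cmat" where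
  "Phi k X M = (\<lambda>a b. \<Sum>n. gen_term k X M n a b)"

text \<open>r^W(i), p^W(i|t) (1-based positions), E^a_b.\<close>
definition occ :: "'d list \<Rightarrow> 'd \<Rightarrow> nat" where
  "occ W i = count_list W i"

definition pos :: "'d list \<Rightarrow> 'd \<Rightarrow> nat \<Rightarrow> nat" where
  "pos W i t = [q + 1. q \<leftarrow> [0..<length W], W ! q = i] ! (t - 1)"

definition Emat :: "nat \<Rightarrow> nat \<Rightarrow> cmat" where
  "Emat a b = (\<lambda>x y. if x = a \<and> y = b then 1 else 0)"

definition MW :: "'d list \<Rightarrow> 'd \<Rightarrow> 'd \<Rightarrow> cmat" where
  "MW W i j = (if i = j \<and> occ W i \<noteq> 0 then
      (\<lambda>x y. \<Sum>t=1..occ W i. Emat (pos W i t) (pos W i t + 1) x y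
                              - Emat (pos W i t + 1) (pos W i t) x y)
    else (\<lambda>x y. 0))"

definition Mtheta :: "'d::finite list \<Rightarrow> real^'d \<Rightarrow> 'd \<Rightarrow> cmat" where
  "Mtheta W \<theta> j = (\<lambda>x y. \<Sum>i\<in>UNIV. complex_of_real (\<theta> $ i) * MW W i j x y)"

definition partial :: "'d::finite \<Rightarrow> (real^'d \<Rightarrow> complex) \<Rightarrow> real^'d \<Rightarrow> complex" where
  "partial i f \<theta> = vector_derivative (\<lambda>t. f (\<theta> + t *\<^sub>R axis i 1)) (at 0)"

fun iter_partial :: "'d::finite list \<Rightarrow> (real^'d \<Rightarrow> complex) \<Rightarrow> real^'d \<Rightarrow> complex" where
  "iter_partial [] f = f"
| "iter_partial (i # is) f = partial i (iter_partial is f)"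

definition smooth_on :: "(real^'d::finite) set \<Rightarrow> (real^'d \<Rightarrow> complex) \<Rightarrow> bool" where
  "smooth_on U f = (\<forall>is. continuous_on U (iter_partial is f) \<and>
     (\<forall>\<theta>\<in>U. \<forall>i. (\<lambda>t. iter_partial is f (\<theta> + t *\<^sub>R axis i 1)) differentiable (at 0)))"

end

theory Submission
  imports Defs
begin

(* Along M^W_(theta) each generator acts as theta_j N_j with the fixed matrix N_j = M^W_j(e_j),
   so a word V contributes theta^r(V) X^V N_V, where r(V) counts the letters of V and N_V is the
   product of the N_v along V.  Hence Phi_X(M^W_(theta)) is a power series in theta whose
   coefficients of total degree n are dominated by ||pi_n(X)|| (k ||N||)^n; on a small ball it can
   be differentiated termwise, and the derivative along W at theta = 0 keeps exactly the words V
   that are rearrangements of W, each with the factor C_W.  Every N_j moves an index by one, and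
   moves it up from p to p + 1 exactly when the p-th letter of W is j; so the (1, n + 1) entry of
   N_V, which needs n upward moves, is 1 for V = W and 0 for every other rearrangement. *)

lemma has_vector_derivative_series:
  fixes f f' :: "nat \<Rightarrow> real \<Rightarrow> 'a::banach"
  assumes S: "open S" "convex S" "x \<in> S"
    and f': "\<And>n t. t \<in> S \<Longrightarrow> (f n has_vector_derivative f' n t) (at t)"
    and lim: "uniform_limit S (\<lambda>n t. \<Sum>j<n. f' j t) g' sequentially"
    and summable: "\<And>t. t \<in> S \<Longrightarrow> summable (\<lambda>n. f n t)"
  shows "((\<lambda>t. \<Sum>n. f n t) has_vector_derivative g' x) (at x)"
proof -
  have "\<exists>g. \<forall>t\<in>S. (\<lambda>n. f n t) sums g t \<and> (g has_derivative (\<lambda>h. h *\<^sub>R g' t)) (at t within S)"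
  proof (rule has_derivative_series[OF S(2) _ _ S(3)])
    show "(f n has_derivative (\<lambda>h. h *\<^sub>R f' n t)) (at t within S)" if "t \<in> S" for n t
      using f'[OF that] by (simp add: has_vector_derivative_def has_derivative_at_withinI)
    show "\<forall>\<^sub>F n in sequentially. \<forall>t\<in>S. \<forall>h. norm ((\<Sum>j<n. h *\<^sub>R f' j t) - h *\<^sub>R g' t) \<le> e * norm h"
      if "e > 0" for e
      using uniform_limitD[OF lim that]
    proof eventually_elim
      case (elim n)
      show ?case
      proof (intro ballI allI)
        fix t h
        assume "t \<in> S"
        then have "\<bar>h\<bar> * dist (\<Sum>j<n. f' j t) (g' t) \<le> \<bar>h\<bar> * e"
          using elim by (intro mult_left_mono) auto
        then show "norm ((\<Sum>j<n. h *\<^sub>R f' j t) - h *\<^sub>R g' t) \<le> e * norm h"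
          by (simp add: dist_norm mult.commute flip: scaleR_sum_right scaleR_diff_right)
      qed
    qed
    show "(\<lambda>n. f n x) sums (\<Sum>n. f n x)"
      using summable[OF S(3)] by (rule summable_sums)
  qed
  then obtain g where g: "\<And>t. t \<in> S \<Longrightarrow> (\<lambda>n. f n t) sums g t"
    and g': "(g has_derivative (\<lambda>h. h *\<^sub>R g' x)) (at x within S)"
    using S(3) by blast
  have "(g has_vector_derivative g' x) (at x)"
    using g' at_within_open[OF S(3,1)] by (simp add: has_vector_derivative_def)
  then show ?thesis
    by (rule has_vector_derivative_transform_within_open[OF _ S(1,3)]) (simp add: g sums_unique)
qed

lemma has_vector_derivative_line_transform:
  fixes \<theta> v :: "'a::real_normed_vector"
  assumes "open U" "\<theta> \<in> U" "\<And>y. y \<in> U \<Longrightarrow> g y = f y"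
    and "((\<lambda>t. g (\<theta> + t *\<^sub>R v)) has_vector_derivative D) (at 0)"
  shows "((\<lambda>t. f (\<theta> + t *\<^sub>R v)) has_vector_derivative D) (at 0)"
proof (rule has_vector_derivative_transform_within_open[OF assms(4)])
  show "open {t::real. \<theta> + t *\<^sub>R v \<in> U}"
    using assms(1) by (rule open_vimage[unfolded vimage_def]) (intro continuous_intros)
qed (use assms(2,3) in auto)

lemma summable_power_diff_majorant:
  fixes a :: "nat \<Rightarrow> real"
  assumes "0 < R" "R \<le> 1" "\<And>n. 0 \<le> a n" "summable (\<lambda>n. a n * (2 * R) ^ n)"
  shows "summable (\<lambda>n. 2 ^ n * a n * R ^ (n - p))"
proof (rule summable_comparison_test[OF _ summable_mult[OF assms(4), of "1 / R ^ p"]],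
    intro exI allI impI)
  fix n
  have "R ^ (n - p) * R ^ p \<le> R ^ n"
  proof (cases "p \<le> n")
    case True
    then show ?thesis by (simp flip: power_add)
  next
    case False
    then show ?thesis using assms(1,2) by (simp add: power_decreasing)
  qed
  then have "R ^ (n - p) \<le> R ^ n / R ^ p"
    using assms(1) by (simp add: field_simps)
  then show "norm (2 ^ n * a n * R ^ (n - p)) \<le> 1 / R ^ p * (a n * (2 * R) ^ n)"
    using assms(1) assms(3)[of n]
    by (simp add: abs_mult power_mult_distrib field_simps mult_left_mono)
qed

definition vec_monomial :: "('d::finite \<Rightarrow> nat) \<Rightarrow> real^'d \<Rightarrow> real" where
  "vec_monomial e \<theta> = (\<Prod>i\<in>UNIV. (\<theta> $ i) ^ e i)"

lemma vec_monomial_split: "vec_monomial e \<theta> = (\<theta> $ i) ^ e i * (\<Prod>j\<in>UNIV - {i}. (\<theta> $ j) ^ e j)"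
  unfolding vec_monomial_def by (simp add: prod.remove)

lemma vec_monomial_line_deriv:
  "((\<lambda>t. vec_monomial e (\<theta> + t *\<^sub>R axis i 1)) has_real_derivative
     real (e i) * vec_monomial (e(i := e i - 1)) (\<theta> + t *\<^sub>R axis i 1)) (at t)"
proof -
  define C where "C = (\<Prod>j\<in>UNIV - {i}. (\<theta> $ j) ^ e j)"
  have line: "(\<theta> + s *\<^sub>R axis i 1) $ j = (if j = i then \<theta> $ j + s else \<theta> $ j)" for s j
    by (simp add: axis_def)
  have "vec_monomial e' (\<theta> + s *\<^sub>R axis i 1) = (\<theta> $ i + s) ^ e' i * C"
    if "\<And>j. j \<noteq> i \<Longrightarrow> e' j = e j" for e' s
  proof -
    have "(\<Prod>j\<in>UNIV - {i}. ((\<theta> + s *\<^sub>R axis i 1) $ j) ^ e' j) = C"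
      unfolding C_def using that by (intro prod.cong) (auto simp: axis_def)
    then show ?thesis by (simp add: vec_monomial_split[of _ _ i] line)
  qed
  then have "vec_monomial e (\<theta> + s *\<^sub>R axis i 1) = (\<theta> $ i + s) ^ e i * C"
    and "vec_monomial (e(i := e i - 1)) (\<theta> + s *\<^sub>R axis i 1) = (\<theta> $ i + s) ^ (e i - 1) * C" for s
    by auto
  then show ?thesis
    by (simp only:) (auto intro!: derivative_eq_intros)
qed

lemma abs_vec_monomial_le:
  assumes "norm \<theta> \<le> R"
  shows "\<bar>vec_monomial e \<theta>\<bar> \<le> R ^ (\<Sum>i\<in>UNIV. e i)"
proof -
  have "\<bar>vec_monomial e \<theta>\<bar> = (\<Prod>i\<in>UNIV. \<bar>\<theta> $ i\<bar> ^ e i)"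
    unfolding vec_monomial_def by (simp add: abs_prod power_abs)
  also have "\<dots> \<le> (\<Prod>i\<in>UNIV. R ^ e i)"
    using order_trans[OF component_le_norm_cart assms]
    by (intro prod_mono) (simp add: power_mono)
  also have "\<dots> = R ^ (\<Sum>i\<in>UNIV. e i)" by (simp add: power_sum)
  finally show ?thesis .
qed

lemma vec_monomial_at_0: "vec_monomial e 0 = (if e = (\<lambda>_. 0) then 1 else 0)"
  unfolding vec_monomial_def by (auto simp: fun_eq_iff)

lemma vec_monomial_count_list_Cons:
  "vec_monomial (count_list (v # V)) \<theta> = \<theta> $ v * vec_monomial (count_list V) \<theta>"
proof -
  have "(\<Prod>j\<in>UNIV - {v}. (\<theta> $ j) ^ count_list (v # V) j) = (\<Prod>j\<in>UNIV - {v}. (\<theta> $ j) ^ count_list V j)"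
    by (intro prod.cong) auto
  then show ?thesis
    by (simp add: vec_monomial_split[of _ _ v])
qed

lemma sum_count_list_UNIV: "(\<Sum>i\<in>(UNIV::'a::finite set). count_list V i) = length V"
  by (rule sum_count_set) auto

lemma finite_words: "finite (words n :: 'd::finite list set)"
  unfolding words_def using finite_lists_length_eq[of "UNIV::'d set" n] by simp

lemma fact_binomial_Suc:
  "fact (Suc j) * real (a choose Suc j) = fact j * real (a choose j) * real (a - j)"
proof -
  have "Suc j * (a choose Suc j) = (a - j) * (a choose j)"
    by (metis binomial_absorption binomial_absorb_comp)
  then have "real (Suc j) * real (a choose Suc j) = real (a - j) * real (a choose j)"
    by (metis of_nat_mult)
  then show ?thesis
    by (metis fact_Suc mult.assoc mult.commute of_nat_fact of_nat_mult)
qed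

definition deriv_coeff :: "'d list \<Rightarrow> 'd::finite list \<Rightarrow> real" where
  "deriv_coeff is V =
     (\<Prod>i\<in>UNIV. fact (count_list is i) * real (count_list V i choose count_list is i))"

lemma deriv_coeff_Cons:
  "deriv_coeff (i # is) V = deriv_coeff is V * real (count_list V i - count_list is i)"
proof -
  define f where "f is j = fact (count_list is j) * real (count_list V j choose count_list is j)"
    for "is" j
  have "(\<Prod>j\<in>UNIV - {i}. f (i # is) j) = (\<Prod>j\<in>UNIV - {i}. f is j)"
    unfolding f_def by (intro prod.cong) auto
  moreover have "f (i # is) i = f is i * real (count_list V i - count_list is i)"
    unfolding f_def using fact_binomial_Suc by simp
  ultimately show ?thesis
    unfolding deriv_coeff_def f_def[symmetric] by (simp add: prod.remove[of _ i])
qed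

lemma deriv_coeff_le:
  assumes "V \<in> words n"
  shows "deriv_coeff is V \<le> (\<Prod>i\<in>UNIV. fact (count_list is i)) * 2 ^ n"
proof -
  have "real (a choose j) \<le> 2 ^ a" for a j
    using binomial_le_pow2[of a j] by (metis of_nat_le_iff of_nat_numeral of_nat_power)
  then have "deriv_coeff is V \<le> (\<Prod>i\<in>UNIV. fact (count_list is i) * 2 ^ count_list V i)"
    unfolding deriv_coeff_def by (intro prod_mono conjI mult_left_mono) simp_all
  also have "\<dots> = (\<Prod>i\<in>UNIV. fact (count_list is i)) * 2 ^ n"
    using assms by (simp add: prod.distrib flip: power_sum add: sum_count_list_UNIV words_def)
  finally show ?thesis .
qed

(* The derivative along the word is of the degree-n part of the series sum_V c_V theta^r(V),
   using d^j/dx^j x^a = j! (a choose j) x^(a - j); the truncated exponent a - j is harmless,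
   as the binomial coefficient vanishes for j > a. *)
definition deriv_term :: "('d list \<Rightarrow> complex) \<Rightarrow> 'd list \<Rightarrow> nat \<Rightarrow> real^'d::finite \<Rightarrow> complex" where
  "deriv_term c is n \<theta> = (\<Sum>V\<in>words n. c V *
     of_real (deriv_coeff is V * vec_monomial (\<lambda>i. count_list V i - count_list is i) \<theta>))"

definition deriv_series :: "('d list \<Rightarrow> complex) \<Rightarrow> 'd list \<Rightarrow> real^'d::finite \<Rightarrow> complex" where
  "deriv_series c is \<theta> = (\<Sum>n. deriv_term c is n \<theta>)"

lemma deriv_term_Nil:
  "deriv_term c [] n \<theta> = (\<Sum>V\<in>words n. c V * of_real (vec_monomial (count_list V) \<theta>))"
  by (simp add: deriv_term_def deriv_coeff_def)

lemma continuous_on_deriv_term: "continuous_on A (deriv_term c is n)"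
  unfolding deriv_term_def vec_monomial_def by (intro continuous_intros)

lemma deriv_term_line_deriv:
  "((\<lambda>t. deriv_term c is n (\<theta> + t *\<^sub>R axis i 1)) has_vector_derivative
     deriv_term c (i # is) n (\<theta> + t *\<^sub>R axis i 1)) (at t)"
proof -
  have "((\<lambda>t. deriv_coeff is V *
        vec_monomial (\<lambda>j. count_list V j - count_list is j) (\<theta> + t *\<^sub>R axis i 1))
      has_real_derivative deriv_coeff (i # is) V *
        vec_monomial (\<lambda>j. count_list V j - count_list (i # is) j) (\<theta> + t *\<^sub>R axis i 1)) (at t)"
    for V
  proof -
    define e where "e = (\<lambda>j. count_list V j - count_list is j)"
    have "(\<lambda>j. count_list V j - count_list (i # is) j) = e(i := e i - 1)"
      by (auto simp: e_def)
    moreover have "deriv_coeff (i # is) V = deriv_coeff is V * real (e i)"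
      by (simp add: e_def deriv_coeff_Cons)
    ultimately show ?thesis
      using DERIV_cmult[OF vec_monomial_line_deriv[of e \<theta> i t], of "deriv_coeff is V"]
      by (simp add: e_def ac_simps)
  qed
  then show ?thesis
    unfolding deriv_term_def
    by (intro has_vector_derivative_sum has_vector_derivative_mult_right
        has_vector_derivative_of_real)
qed

lemma deriv_term_norm_le:
  assumes "norm \<theta> \<le> R" "0 \<le> R" "R \<le> 1"
  shows "norm (deriv_term c is n \<theta>) \<le>
    (\<Prod>i\<in>UNIV. fact (count_list is i)) * 2 ^ n * (\<Sum>V\<in>words n. norm (c V)) * R ^ (n - length is)"
proof -
  define P where "P = (\<Prod>i\<in>UNIV. fact (count_list is i)) * (2::real) ^ n"
  have term_le: "norm (of_real (deriv_coeff is V *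
      vec_monomial (\<lambda>i. count_list V i - count_list is i) \<theta>) :: complex) \<le> P * R ^ (n - length is)"
    if V: "V \<in> words n" for V
  proof -
    have "n = (\<Sum>i\<in>UNIV. count_list V i)"
      using V by (simp add: words_def sum_count_list_UNIV)
    also have "\<dots> \<le> (\<Sum>i\<in>UNIV. (count_list V i - count_list is i) + count_list is i)"
      by (intro sum_mono) simp
    finally have "n - length is \<le> (\<Sum>i\<in>UNIV. count_list V i - count_list is i)"
      by (simp add: sum.distrib sum_count_list_UNIV)
    then have "R ^ (\<Sum>i\<in>UNIV. count_list V i - count_list is i) \<le> R ^ (n - length is)"
      using assms(2,3) by (rule power_decreasing)
    then have "\<bar>vec_monomial (\<lambda>i. count_list V i - count_list is i) \<theta>\<bar> \<le> R ^ (n - length is)"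
      using abs_vec_monomial_le[OF assms(1)] by (rule order_trans[rotated])
    moreover have "0 \<le> deriv_coeff is V"
      unfolding deriv_coeff_def by (simp add: prod_nonneg)
    ultimately show ?thesis
      using deriv_coeff_le[OF V, of "is"]
      by (simp only: norm_of_real abs_mult P_def) (simp add: mult_mono)
  qed
  have "norm (deriv_term c is n \<theta>) \<le> (\<Sum>V\<in>words n. norm (c V) * (P * R ^ (n - length is)))"
    unfolding deriv_term_def
    by (intro order_trans[OF norm_sum] sum_mono, unfold norm_mult)
       (intro mult_left_mono term_le norm_ge_zero)
  also have "\<dots> = P * (\<Sum>V\<in>words n. norm (c V)) * R ^ (n - length is)"
    by (simp add: sum_distrib_left sum_distrib_right ac_simps)
  finally show ?thesis
    by (simp add: P_def)
qed

lemma deriv_term_at_zero: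
  "deriv_term c is n 0 = of_nat (\<Prod>i\<in>UNIV. fact (count_list is i)) *
     (\<Sum>V\<in>{V\<in>words n. count_list V = count_list is}. c V)"
proof -
  have summand:
    "c V * of_real (deriv_coeff is V * vec_monomial (\<lambda>i. count_list V i - count_list is i) 0) =
      (if count_list V = count_list is then of_nat (\<Prod>i\<in>UNIV. fact (count_list is i)) * c V else 0)"
    for V
  proof (cases "count_list V = count_list is")
    case True
    then show ?thesis
      by (simp add: deriv_coeff_def vec_monomial_at_0)
  next
    case False
    have "deriv_coeff is V * vec_monomial (\<lambda>i. count_list V i - count_list is i) 0 = 0"
    proof (rule ccontr)
      assume "deriv_coeff is V * vec_monomial (\<lambda>i. count_list V i - count_list is i) 0 \<noteq> 0"
      then have "(\<lambda>i. count_list V i - count_list is i) = (\<lambda>_. 0)" and "deriv_coeff is V \<noteq> 0"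
        by (auto simp: vec_monomial_at_0 split: if_splits)
      then have "count_list V i \<le> count_list is i" and "count_list is i \<le> count_list V i" for i
        unfolding deriv_coeff_def by (auto simp: fun_eq_iff not_less)
      with False show False
        by (auto simp: fun_eq_iff intro: antisym)
    qed
    with False show ?thesis by simp
  qed
  show ?thesis
    unfolding deriv_term_def summand
    by (simp only: sum.inter_filter[OF finite_words] sum_distrib_left if_distrib mult_zero_right)
qed

lemma deriv_series_at_zero:
  "deriv_series c is 0 = of_nat (\<Prod>i\<in>UNIV. fact (count_list is i)) *
     (\<Sum>V\<in>{V\<in>words (length is). count_list V = count_list is}. c V)"
proof -
  have "deriv_term c is n 0 = 0" if "n \<notin> {length is}" for n
  proof -
    have "{V\<in>words n. count_list V = count_list is} = {}"
      using that by (auto simp: words_def simp flip: sum_count_list_UNIV)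
    then show ?thesis by (simp only: deriv_term_at_zero sum.empty mult_zero_right)
  qed
  then show ?thesis
    unfolding deriv_series_def
    by (subst suminf_finite[of "{length is}"]) (simp_all add: deriv_term_at_zero)
qed

locale word_series =
  fixes c :: "'d::finite list \<Rightarrow> complex" and \<sigma> :: real
  assumes radius_pos: "0 < \<sigma>"
    and abs_coeff_summable: "\<And>s. 0 \<le> s \<Longrightarrow> s < \<sigma> \<Longrightarrow> summable (\<lambda>n. (\<Sum>V\<in>words n. norm (c V)) * s ^ n)"
begin

(* Halving the radius absorbs the factor 2^n of deriv_coeff_le; the cap at 1 bounds a monomial
   of degree at least n - length is by R^(n - length is). *)
abbreviation conv_ball :: "(real^'d) set" where
  "conv_ball \<equiv> ball 0 (min 1 (\<sigma> / 2))"

lemma conv_ball_radius: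
  assumes "\<theta> \<in> conv_ball"
  obtains R where "0 < R" "R < min 1 (\<sigma> / 2)" "norm \<theta> < R"
proof -
  from assms have "norm \<theta> < min 1 (\<sigma> / 2)"
    by simp
  then obtain R where "norm \<theta> < R" "R < min 1 (\<sigma> / 2)"
    using dense by blast
  moreover have "0 < R"
    using norm_ge_zero[of \<theta>] \<open>norm \<theta> < R\<close> by linarith
  ultimately show ?thesis using that by blast
qed

lemma deriv_term_majorant_summable:
  assumes "0 < R" "R < min 1 (\<sigma> / 2)"
  shows "summable (\<lambda>n. (\<Prod>i\<in>UNIV. fact (count_list is i)) * 2 ^ n *
    (\<Sum>V\<in>words n. norm (c V)) * R ^ (n - length is))"
proof -
  have "summable (\<lambda>n. 2 ^ n * (\<Sum>V\<in>words n. norm (c V)) * R ^ (n - length is))"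
    using assms by (intro summable_power_diff_majorant abs_coeff_summable sum_nonneg) auto
  then show ?thesis
    using summable_mult[of _ "\<Prod>i\<in>UNIV. fact (count_list is i)"] by (simp add: mult.assoc)
qed

lemma uniform_limit_deriv_term:
  assumes "0 < R" "R < min 1 (\<sigma> / 2)"
  shows "uniform_limit (cball 0 R) (\<lambda>n \<theta>. \<Sum>j<n. deriv_term c is j \<theta>) (deriv_series c is)
    sequentially"
  unfolding deriv_series_def[abs_def]
  using assms by (intro Weierstrass_m_test[OF deriv_term_norm_le deriv_term_majorant_summable]) auto

lemma summable_deriv_term:
  assumes "\<theta> \<in> conv_ball"
  shows "summable (\<lambda>n. deriv_term c is n \<theta>)"
proof -
  obtain R where R: "0 < R" "R < min 1 (\<sigma> / 2)" "norm \<theta> < R"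
    using conv_ball_radius[OF assms] .
  show ?thesis
  proof (rule summable_norm_cancel,
      rule summable_comparison_test[OF _ deriv_term_majorant_summable[OF R(1,2)]])
    show "\<exists>N. \<forall>n\<ge>N. norm (norm (deriv_term c is n \<theta>)) \<le> (\<Prod>i\<in>UNIV. fact (count_list is i)) * 2 ^ n *
        (\<Sum>V\<in>words n. norm (c V)) * R ^ (n - length is)"
      using R deriv_term_norm_le[of \<theta> R] by auto
  qed
qed

lemma continuous_on_deriv_series: "continuous_on conv_ball (deriv_series c is)"
proof (rule continuous_at_imp_continuous_on, intro ballI)
  fix \<theta> :: "real^'d"
  assume "\<theta> \<in> conv_ball"
  then obtain R where R: "0 < R" "R < min 1 (\<sigma> / 2)" "norm \<theta> < R"
    by (rule conv_ball_radius)
  have "continuous_on (cball 0 R) (deriv_series c is)"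
    by (rule uniform_limit_theorem[OF always_eventually uniform_limit_deriv_term[OF R(1,2)]])
       (simp_all add: continuous_on_sum continuous_on_deriv_term)
  then have "continuous_on (ball 0 R) (deriv_series c is)"
    by (rule continuous_on_subset) auto
  then show "isCont (deriv_series c is) \<theta>"
    using R(3) by (simp add: continuous_on_eq_continuous_at)
qed

lemma deriv_series_line_deriv:
  assumes "\<theta> \<in> conv_ball"
  shows "((\<lambda>t. deriv_series c is (\<theta> + t *\<^sub>R axis i 1)) has_vector_derivative
    deriv_series c (i # is) \<theta>) (at 0)"
proof -
  obtain R where R: "0 < R" "R < min 1 (\<sigma> / 2)" "norm \<theta> < R"
    using conv_ball_radius[OF assms] .
  define S where "S = ball (0::real) (R - norm \<theta>)"
  have line_in_ball: "norm (\<theta> + t *\<^sub>R axis i 1) < R" if "t \<in> S" for t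
    using that norm_triangle_ineq[of \<theta> "t *\<^sub>R axis i (1::real)"] by (auto simp: S_def)
  have "uniform_limit S (\<lambda>n t. \<Sum>j<n. deriv_term c (i # is) j (\<theta> + t *\<^sub>R axis i 1))
      (\<lambda>t. deriv_series c (i # is) (\<theta> + t *\<^sub>R axis i 1)) sequentially"
    unfolding deriv_series_def
    using R line_in_ball
    by (intro Weierstrass_m_test[OF deriv_term_norm_le deriv_term_majorant_summable])
      (auto intro: less_imp_le)
  moreover have "summable (\<lambda>n. deriv_term c is n (\<theta> + t *\<^sub>R axis i 1))" if "t \<in> S" for t
    using line_in_ball[OF that] R(2) by (intro summable_deriv_term) simp
  ultimately have "((\<lambda>t. \<Sum>n. deriv_term c is n (\<theta> + t *\<^sub>R axis i 1)) has_vector_derivative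
      deriv_series c (i # is) (\<theta> + 0 *\<^sub>R axis i 1)) (at 0)"
    using R(3) deriv_term_line_deriv
    by (intro has_vector_derivative_series[where S = S]) (auto simp: S_def)
  then show ?thesis
    by (simp add: deriv_series_def)
qed

lemma iter_partial_deriv_series:
  assumes "\<theta> \<in> conv_ball"
  shows "iter_partial is (deriv_series c []) \<theta> = deriv_series c is \<theta>"
  using assms
proof (induction "is" arbitrary: \<theta>)
  case (Cons j js)
  have "((\<lambda>t. iter_partial js (deriv_series c []) (\<theta> + t *\<^sub>R axis j 1)) has_vector_derivative
      deriv_series c (j # js) \<theta>) (at 0)"
    using Cons
    by (intro has_vector_derivative_line_transform[where U = conv_ball,
          OF open_ball _ _ deriv_series_line_deriv]) auto
  then show ?case
    by (simp add: partial_def vector_derivative_at)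
qed simp

lemma smooth_on_deriv_series: "smooth_on conv_ball (deriv_series c [])"
  unfolding smooth_on_def
proof (intro allI conjI ballI)
  fix "is" :: "'d list"
  show "continuous_on conv_ball (iter_partial is (deriv_series c []))"
    using continuous_on_deriv_series by (rule continuous_on_cong[THEN iffD1, rotated 2])
      (simp_all add: iter_partial_deriv_series)
  fix \<theta> i
  assume "\<theta> \<in> conv_ball"
  then have "((\<lambda>t. iter_partial is (deriv_series c []) (\<theta> + t *\<^sub>R axis i 1)) has_vector_derivative
      deriv_series c (i # is) \<theta>) (at 0)"
    by (intro has_vector_derivative_line_transform[where U = conv_ball,
          OF open_ball _ _ deriv_series_line_deriv]) (auto simp: iter_partial_deriv_series)
  then show "(\<lambda>t. iter_partial is (deriv_series c []) (\<theta> + t *\<^sub>R axis i 1)) differentiable at 0"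
    by (rule differentiableI_vector)
qed

end

lemma mat_word_norm_le:
  assumes "\<And>v x y. norm (N v x y) \<le> L"
  shows "norm (mat_word k N V x y) \<le> (real k * L) ^ length V"
proof (induction V arbitrary: x y)
  case Nil
  then show ?case by (simp add: mat_id_def)
next
  case (Cons v V)
  have "norm (mat_word k N (v # V) x y) \<le> (\<Sum>c=1..k. norm (N v x c) * norm (mat_word k N V c y))"
    unfolding mat_word.simps mat_mult_def norm_mult[symmetric] by (rule norm_sum)
  also have "\<dots> \<le> (\<Sum>c=1..k. L * (real k * L) ^ length V)"
    using assms order_trans[OF norm_ge_zero assms]
    by (intro sum_mono mult_mono Cons.IH) auto
  finally show ?case by simp
qed

lemma mat_word_upper_band_zero:
  assumes band: "\<And>v x y. N v x y \<noteq> 0 \<Longrightarrow> y \<le> x + 1"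
    and "x + length V < y"
  shows "mat_word k N V x y = 0"
  using assms(2)
proof (induction V arbitrary: x)
  case Nil
  then show ?case by (simp add: mat_id_def)
next
  case (Cons v V)
  have zero: "N v x c * mat_word k N V c y = 0" for c
    using band[of v x c] Cons by fastforce
  show ?case
    unfolding mat_word.simps mat_mult_def zero by simp
qed

(* A path of length V from x to x + length V that never rises by more than one must rise by
   exactly one at every step. *)
lemma mat_word_upper_band_diag:
  assumes band: "\<And>v x y. N v x y \<noteq> 0 \<Longrightarrow> y \<le> x + 1"
    and "x + length V \<le> k"
  shows "mat_word k N V x (x + length V) = (\<Prod>j<length V. N (V ! j) (x + j) (x + j + 1))"
  using assms(2)
proof (induction V arbitrary: x)
  case Nil
  then show ?case by (simp add: mat_id_def)
next
  case (Cons v V)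
  let ?y = "Suc (x + length V)"
  have below: "mat_word k N V c ?y = 0" if "c < x + 1" for c
    by (rule mat_word_upper_band_zero) (use band that in auto)
  have "(\<Sum>c\<in>{1..k} - {x + 1}. N v x c * mat_word k N V c ?y) = 0"
  proof (intro sum.neutral ballI)
    fix c
    assume "c \<in> {1..k} - {x + 1}"
    then have "N v x c = 0 \<or> c < x + 1"
      using band[of v x c] by fastforce
    then show "N v x c * mat_word k N V c ?y = 0"
      using below by auto
  qed
  then have "mat_word k N (v # V) x (x + length (v # V)) =
      N v x (x + 1) * mat_word k N V (x + 1) (x + 1 + length V)"
    using Cons.prems by (simp add: mat_mult_def sum.remove[of _ "x + 1"])
  also have "\<dots> = (\<Prod>j<length (v # V). N ((v # V) ! j) (x + j) (x + j + 1))"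
    using Cons.IH[of "x + 1"] Cons.prems unfolding length_Cons prod.lessThan_Suc_shift
    by (simp add: ac_simps)
  finally show ?case .
qed

lemma MW_diag:
  "MW W i i x y = (\<Sum>t=1..occ W i.
     Emat (pos W i t) (pos W i t + 1) x y - Emat (pos W i t + 1) (pos W i t) x y)"
  by (simp add: MW_def)

lemma Mtheta_apply: "Mtheta W \<theta> j x y = of_real (\<theta> $ j) * MW W j j x y"
  unfolding Mtheta_def by (subst sum.remove[of _ j]) (auto simp: MW_def)

lemma norm_MW_le: "norm (MW W i j x y) \<le> 2 * real (length W)"
proof (cases "i = j")
  case True
  have "norm (MW W i j x y) \<le> (\<Sum>t=1..occ W i. 2)"
    unfolding True MW_diag
    by (intro order_trans[OF norm_sum] sum_mono order_trans[OF norm_triangle_ineq4])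
       (simp add: Emat_def)
  also have "\<dots> \<le> 2 * real (length W)"
    using count_le_length[of W i] by (simp add: occ_def)
  finally show ?thesis .
qed (simp add: MW_def)

lemma MW_upper_band:
  assumes "MW W i j x y \<noteq> 0"
  shows "y \<le> x + 1"
proof (rule ccontr)
  assume "\<not> y \<le> x + 1"
  then have "MW W i i x y = 0"
    by (auto simp: MW_diag Emat_def intro!: sum.neutral)
  with assms show False
    by (cases "i = j") (auto simp: MW_def)
qed

lemma pos_eq_nth: "pos W i t = map (\<lambda>q. q + 1) (filter (\<lambda>q. W ! q = i) [0..<length W]) ! (t - 1)"
proof -
  have concat_singletons: "concat (map (\<lambda>q. if P q then [f q] else []) xs) = map f (filter P xs)"
    for P f and xs :: "nat list"
    by (induction xs) auto
  show ?thesis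
    by (simp only: pos_def concat_singletons)
qed

lemma MW_superdiag:
  assumes "0 < x"
  shows "MW W v v x (x + 1) = (if x \<le> length W \<and> W ! (x - 1) = v then 1 else 0)"
proof -
  define L where "L = map (\<lambda>q. q + 1) (filter (\<lambda>q. W ! q = v) [0..<length W])"
  have "length L = card {q. q < length W \<and> W ! q = v}"
    unfolding L_def length_map length_filter_conv_card
    by (intro arg_cong[where f = card]) auto
  also have "\<dots> = occ W v"
    by (simp add: occ_def count_list_eq_length_filter length_filter_conv_card eq_commute)
  finally have len: "length L = occ W v" .
  have "distinct L"
    by (simp add: L_def distinct_map)
  have mem: "x \<in> set L \<longleftrightarrow> x \<le> length W \<and> W ! (x - 1) = v"
    using assms unfolding L_def by (cases x) auto
  have pos: "pos W v t = L ! (t - 1)" for t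
    unfolding L_def by (rule pos_eq_nth)
  have "MW W v v x (x + 1) = (\<Sum>t=1..length L. if L ! (t - 1) = x then 1 else 0)"
    unfolding MW_diag len[symmetric] by (intro sum.cong refl) (simp add: pos Emat_def)
  also have "\<dots> = (\<Sum>t<length L. if L ! t = x then 1 else 0)"
    by (simp add: sum.atLeast1_atMost_eq)
  also have "\<dots> = sum_list (map (\<lambda>y. if y = x then 1 else 0) L)"
    by (simp add: sum_list_sum_nth atLeast0LessThan)
  also have "\<dots> = (\<Sum>y\<in>set L. if y = x then 1 else 0)"
    using \<open>distinct L\<close> by (rule sum_list_distinct_conv_sum_set)
  finally show ?thesis
    using mem by simp
qed

lemma mat_word_MW_corner:
  assumes "length V = length W" "length W + 1 \<le> k"
  shows "mat_word k (\<lambda>j. MW W j j) V 1 (length W + 1) = (if V = W then 1 else 0)"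
proof -
  have "mat_word k (\<lambda>j. MW W j j) V 1 (1 + length V) =
      (\<Prod>j<length V. MW W (V ! j) (V ! j) (1 + j) (1 + j + 1))"
    by (rule mat_word_upper_band_diag) (use assms MW_upper_band in auto)
  also have "\<dots> = (\<Prod>j<length W. if W ! j = V ! j then 1 else 0)"
    using assms(1) MW_superdiag[of "Suc j" W v for j v] by (intro prod.cong) simp_all
  also have "\<dots> = (if V = W then 1 else 0)"
    using assms(1) by (auto simp: list_eq_iff_nth_eq intro!: prod_zero) (metis lessThan_iff)
  finally show ?thesis
    using assms(1) by (simp add: add.commute)
qed

lemma sum_rearrangements_mat_word_MW_corner:
  assumes "length W + 1 \<le> k"
  shows "(\<Sum>V\<in>{V\<in>words (length W). count_list V = count_list W}.
      of_real (X V) * mat_word k (\<lambda>j. MW W j j) V 1 (length W + 1)) = of_real (X W)"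
proof -
  let ?A = "{V\<in>words (length W). count_list V = count_list W}"
  have "finite ?A"
    by (rule finite_subset[OF _ finite_words]) auto
  moreover have "W \<in> ?A"
    by (simp add: words_def)
  moreover have "of_real (X V) * mat_word k (\<lambda>j. MW W j j) V 1 (length W + 1) =
      (if V = W then of_real (X W) else 0)" if "V \<in> ?A" for V
    using that assms mat_word_MW_corner[of V W k] by (simp add: words_def)
  then have "(\<Sum>V\<in>?A. of_real (X V) * mat_word k (\<lambda>j. MW W j j) V 1 (length W + 1)) =
      (\<Sum>V\<in>?A. if V = W then of_real (X W) else 0)"
    by (rule sum.cong[OF refl])
  ultimately show ?thesis
    by (simp only: sum.delta if_True)
qed

lemma mat_word_Mtheta:
  "mat_word k (Mtheta W \<theta>) V x y =
     of_real (vec_monomial (count_list V) \<theta>) * mat_word k (\<lambda>j. MW W j j) V x y"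
proof (induction V arbitrary: x y)
  case Nil
  then show ?case by (simp add: vec_monomial_def)
next
  case (Cons v V)
  have "mat_word k (Mtheta W \<theta>) (v # V) x y = (\<Sum>c=1..k. of_real (\<theta> $ v) * MW W v v x c *
      (of_real (vec_monomial (count_list V) \<theta>) * mat_word k (\<lambda>j. MW W j j) V c y))"
    by (simp add: mat_mult_def Mtheta_apply Cons.IH)
  also have "\<dots> = of_real (\<theta> $ v * vec_monomial (count_list V) \<theta>) *
      (\<Sum>c=1..k. MW W v v x c * mat_word k (\<lambda>j. MW W j j) V c y)"
    by (simp add: sum_distrib_left ac_simps)
  finally show ?case
    by (simp only: vec_monomial_count_list_Cons mat_word.simps mat_mult_def)
qed

lemma gen_term_Mtheta:
  "gen_term k X (Mtheta W \<theta>) n a b =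
     deriv_term (\<lambda>V. of_real (X V) * mat_word k (\<lambda>j. MW W j j) V a b) [] n \<theta>"
  by (simp add: gen_term_def deriv_term_Nil mat_word_Mtheta ac_simps)

lemma summable_proj_norm_power:
  assumes "0 \<le> r" "ereal r < radius X"
  shows "summable (\<lambda>n. proj_norm X n * r ^ n)"
proof -
  have "summable (\<lambda>n. norm (complex_of_real (proj_norm X n) * of_real r ^ n))"
    using assms by (intro abs_summable_in_conv_radius) (simp add: radius_def)
  moreover have "proj_norm X n \<ge> 0" for n
    by (simp add: proj_norm_def sum_nonneg)
  ultimately show ?thesis
    using assms(1) by (simp add: norm_mult norm_power del: of_real_sum)
qed

lemma sum_norm_coeff_mat_word_le:
  assumes "\<And>v x y. norm (N v x y) \<le> L"
  shows "(\<Sum>V\<in>words n. norm (of_real (X V) * mat_word k N V a b)) \<le> proj_norm X n * (real k * L) ^ n"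
proof -
  have "norm (mat_word k N V a b) \<le> (real k * L) ^ length V" for V
    by (rule mat_word_norm_le) (rule assms)
  then show ?thesis
    unfolding proj_norm_def sum_distrib_right
    by (intro sum_mono) (auto simp: norm_mult words_def intro: mult_left_mono)
qed

lemma word_series_mat_word:
  assumes "0 < radius X" and N: "\<And>v x y. norm (N v x y) \<le> L"
  obtains \<sigma> where "\<And>a b. word_series (\<lambda>V. of_real (X V) * mat_word k N V a b) \<sigma>"
proof -
  obtain r where "0 < ereal r" "ereal r < radius X"
    using ereal_dense2[OF assms(1)] by blast
  then have r: "0 < r" "ereal r < radius X"
    by simp_all
  have "0 \<le> real k * L"
    using order_trans[OF norm_ge_zero N] by simp
  define K where "K = real k * L + 1"
  have K: "0 < K" "real k * L \<le> K"
    using \<open>0 \<le> real k * L\<close> by (simp_all add: K_def)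
  have "(\<Sum>V\<in>words n. norm (of_real (X V) * mat_word k N V a b)) * s ^ n \<le> proj_norm X n * r ^ n"
    if s: "0 \<le> s" "s < r / K" for n a b s
  proof -
    have "0 \<le> proj_norm X n"
      by (simp add: proj_norm_def sum_nonneg)
    moreover have "real k * L * s \<le> r"
      using s K mult_right_mono[OF K(2) s(1)] by (simp add: field_simps)
    then have "(real k * L * s) ^ n \<le> r ^ n"
      using \<open>0 \<le> real k * L\<close> s(1) by (intro power_mono) simp_all
    ultimately have "proj_norm X n * (real k * L) ^ n * s ^ n \<le> proj_norm X n * r ^ n"
      by (simp add: mult.assoc mult_left_mono flip: power_mult_distrib)
    moreover have "(\<Sum>V\<in>words n. norm (of_real (X V) * mat_word k N V a b)) \<le>
        proj_norm X n * (real k * L) ^ n"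
      by (rule sum_norm_coeff_mat_word_le) (rule N)
    ultimately show ?thesis
      using s(1) by (meson mult_right_mono order_trans zero_le_power)
  qed
  then have "word_series (\<lambda>V. of_real (X V) * mat_word k N V a b) (r / K)" for a b
    using r K
    by unfold_locales
      (auto intro: summable_comparison_test[OF _ summable_proj_norm_power[OF _ r(2)]] simp: sum_nonneg)
  then show ?thesis
    using that by blast
qed

theorem theorem1p8:
  fixes X :: "'d::finite list \<Rightarrow> real" and W :: "'d list" and k :: nat
  assumes "radius X > 0" and "k \<ge> length W + 1"
  shows "\<exists>U. open U \<and> 0 \<in> U \<and> (\<forall>\<theta>\<in>U. Phi_defined k X (Mtheta W \<theta>)) \<and>
           (\<forall>a\<in>{1..k}. \<forall>b\<in>{1..k}. smooth_on U (\<lambda>\<theta>. Phi k X (Mtheta W \<theta>) a b)) \<and>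
           complex_of_real (X W) =
             iter_partial W (\<lambda>\<theta>. Phi k X (Mtheta W \<theta>) 1 (length W + 1)) 0
             / of_nat (\<Prod>i\<in>UNIV. fact (occ W i))"
proof -
  define c where "c a b = (\<lambda>V. of_real (X V) * mat_word k (\<lambda>j. MW W j j) V a b)" for a b
  obtain \<sigma> where series: "\<And>a b. word_series (c a b) \<sigma>"
    using word_series_mat_word[where N = "\<lambda>j. MW W j j", OF assms(1) norm_MW_le]
    unfolding c_def by blast
  have Phi_eq: "(\<lambda>\<theta>. Phi k X (Mtheta W \<theta>) a b) = deriv_series (c a b) []" for a b
    by (simp add: fun_eq_iff Phi_def deriv_series_def gen_term_Mtheta c_def)
  define U where "U = ball (0::real^'d) (min 1 (\<sigma> / 2))"
  have "0 \<in> U"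
    using word_series.radius_pos[OF series] by (simp add: U_def)
  have "iter_partial W (\<lambda>\<theta>. Phi k X (Mtheta W \<theta>) 1 (length W + 1)) 0 =
      deriv_series (c 1 (length W + 1)) W 0"
    using word_series.iter_partial_deriv_series[OF series \<open>0 \<in> U\<close>[unfolded U_def]]
    by (simp only: Phi_eq)
  also have "\<dots> = of_nat (\<Prod>i\<in>UNIV. fact (occ W i)) * complex_of_real (X W)"
    unfolding deriv_series_at_zero c_def occ_def
    by (simp only: sum_rearrangements_mat_word_MW_corner[OF assms(2)])
  finally have derivative_at_0:
    "iter_partial W (\<lambda>\<theta>. Phi k X (Mtheta W \<theta>) 1 (length W + 1)) 0 =
      of_nat (\<Prod>i\<in>UNIV. fact (occ W i)) * complex_of_real (X W)" .
  have "Phi_defined k X (Mtheta W \<theta>)" if "\<theta> \<in> U" for \<theta>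
    using word_series.summable_deriv_term[OF series] that
    by (simp add: Phi_defined_def gen_term_Mtheta c_def U_def)
  then show ?thesis
    using word_series.smooth_on_deriv_series[OF series] \<open>0 \<in> U\<close> derivative_at_0
    by (intro exI[of _ U]) (auto simp: U_def Phi_eq)
qed

end
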